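(* Let $(\mathcal X,d)$ be a finite distance space and $\mathcal C=\{C_1,\ldots,C_k\}$ any clustering of $\mathcal X$ with cores $C_1^o,\ldots,C_k^o$, and let $\beta=\min_i|C_i^o|/|\mathcal X|$. Fix an integer $\ell$ with $k\le\ell\le|\mathcal X|$. Then for any ordering of $\mathcal X$, with probability at least $1-ke^{-\beta\ell}$ (over the internal randomness of Algorithm subsample), the final set $T$ produced by Algorithm subsample with parameter $\ell$ induces (when listed in any order) a clustering of $\mathcal X$ that is a refinement of $\mathcal C$.
   Context: A distance space $(\mathcal X,d)$ is a set with a symmetric function $d:\mathcal X\times\mathcal X\to\mathbb R_{\ge0}$ with $d(x,x)=0$. A clustering of $\mathcal X$ is a set of nonempty, pairwise disjoint subsets whose union is $\mathcal X$. The core of cluster $C_i$ is the maximal subset $C_i^o\subset C_i$ such that $d(x,z)<d(x,y)$ for all $x\in C_i$, $z\in C_i^o$, $y\notin C_i$. A list $T=(t_1,\ldots,t_m)$ induces the clustering of $\mathcal X$ assigning each $x$ to the index $i$ minimizing $d(x,t_i)$ (ties by smallest $i$), empty clusters discarded. $\mathcal C$ is a refinement of $\mathcal C'$ if $x\sim_{\mathcal C}y$ implies $x\sim_{\mathcal C'}y$, where $x\sim_{\mathcal C}y$ means $x,y$ lie in the same cluster of $\mathcal C$. Algorithm subsample with parameter $\ell$, on input sequence $x_1,\ldots,x_N$: set $T=\{x_1,\ldots,x_\ell\}$; for $t=\ell+1,\ldots,N$: receive $x_t$, and with probability $\ell/t$ (independently) remove an element of $T$ chosen uniformly at random and add $x_t$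 to $T$. Output the final $T$. *)

theory Defs
  imports "HOL-Probability.Probability" "HOL-Library.Disjoint_Sets"
begin

definition distance_space :: "'a set \<Rightarrow> ('a \<Rightarrow> 'a \<Rightarrow> real) \<Rightarrow> bool" where
  "distance_space X d \<longleftrightarrow>
     (\<forall>x\<in>X. \<forall>y\<in>X. d x y = d y x \<and> d x y \<ge> 0) \<and> (\<forall>x\<in>X. d x x = 0)"

text \<open>The core of a cluster C of X: the maximal subset Co of C with
  d x z < d x y for all x in C, z in Co, y in X - C.  Since the condition is pointwise
  in z, the maximal such subset is exactly the following set.\<close>
definition core :: "'a set \<Rightarrow> ('a \<Rightarrow> 'a \<Rightarrow> real) \<Rightarrow> 'a set \<Rightarrow> 'a set" where
  "core X d C = {z \<in> C. \<forall>x\<in>C. \<forall>y\<in>X - C. d x z < d x y}"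

definition assign :: "('a \<Rightarrow> 'a \<Rightarrow> real) \<Rightarrow> 'a list \<Rightarrow> 'a \<Rightarrow> nat" where
  "assign d ts x = (LEAST i. i < length ts \<and> (\<forall>j<length ts. d x (ts ! i) \<le> d x (ts ! j)))"

definition induced_clustering :: "'a set \<Rightarrow> ('a \<Rightarrow> 'a \<Rightarrow> real) \<Rightarrow> 'a list \<Rightarrow> 'a set set" where
  "induced_clustering X d ts = {{x \<in> X. assign d ts x = i} | i. i < length ts} - {{}}"

definition same_cluster :: "'a set set \<Rightarrow> 'a \<Rightarrow> 'a \<Rightarrow> bool" where
  "same_cluster P x y \<longleftrightarrow> (\<exists>B\<in>P. x \<in> B \<and> y \<in> B)"

definition refinement :: "'a set set \<Rightarrow> 'a set set \<Rightarrow> bool" where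
  "refinement P Q \<longleftrightarrow> (\<forall>x y. same_cluster P x y \<longrightarrow> same_cluster Q x y)"

text \<open>Algorithm subsample.  subsample_aux l t xs T processes the remaining input xs,
  where t is the (1-based) time index of the head of xs.\<close>
fun subsample_aux :: "nat \<Rightarrow> nat \<Rightarrow> 'a list \<Rightarrow> 'a set \<Rightarrow> 'a set pmf" where
  "subsample_aux l t [] T = return_pmf T"
| "subsample_aux l t (x # xs) T =
     bind_pmf (bernoulli_pmf (real l / real t)) (\<lambda>b.
       bind_pmf (if b then map_pmf (\<lambda>y. insert x (T - {y})) (pmf_of_set T) else return_pmf T)
         (\<lambda>T'. subsample_aux l (Suc t) xs T'))"

definition subsample :: "nat \<Rightarrow> 'a list \<Rightarrow> 'a set pmf" where
  "subsample l xs = subsample_aux l (Suc l) (drop l xs) (set (take l xs))"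

end

theory Submission
  imports Defs
begin

(* Algorithm subsample is reservoir sampling: after the first t input points
   have been processed, T is a uniformly random l-element subset of them.  One reservoir
   step keeps this invariant, since an l-set S of the first t+1 points is reached either by
   keeping S (if the new point x is not in S) or by swapping x in for one of the t+1-l old
   points outside S (if x is in S).  So the output of subsample is uniform on the l-subsets
   of X (subsample_uniform).

   Deterministically, if T meets the core of every cluster B, each x in B is nearest to a
   centre inside B, because a core point of B is strictly closer to x than anything outside
   B; hence the clustering induced by T refines C (hitting_all_cores_refines).

   Finally, a uniform l-subset of an n-set misses a fixed c-set with probability
   binom(n-c,l)/binom(n,l) <= (1-c/n)^l <= exp(-c l/n), and a union bound over the
   clusters gives the theorem. *)

definition subsets_of_card :: "nat \<Rightarrow> 'a set \<Rightarrow> 'a set set" where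
  "subsets_of_card l A = {B. B \<subseteq> A \<and> card B = l}"

lemma finite_subsets_of_card: "finite A \<Longrightarrow> finite (subsets_of_card l A)"
  unfolding subsets_of_card_def by (rule finite_subset[of _ "Pow A"]) auto

lemma subsets_of_card_nonempty: "finite A \<Longrightarrow> l \<le> card A \<Longrightarrow> subsets_of_card l A \<noteq> {}"
  unfolding subsets_of_card_def using obtain_subset_with_card_n by blast

lemma card_subsets_of_card: "finite A \<Longrightarrow> card (subsets_of_card l A) = card A choose l"
  unfolding subsets_of_card_def by (rule n_subsets)

definition reservoir_step :: "nat \<Rightarrow> nat \<Rightarrow> 'a \<Rightarrow> 'a set \<Rightarrow> 'a set pmf" where
  "reservoir_step l t x T =
     bind_pmf (bernoulli_pmf (real l / real t))
       (\<lambda>b. if b then map_pmf (\<lambda>y. insert x (T - {y})) (pmf_of_set T) else return_pmf T)"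

lemma subsample_aux_Cons:
  "subsample_aux l t (x # xs) = (\<lambda>T. bind_pmf (reservoir_step l t x T) (subsample_aux l (Suc t) xs))"
  by (simp add: reservoir_step_def bind_assoc_pmf fun_eq_iff)

lemma pmf_reservoir_step:
  assumes T: "finite T" "card T = l" and t: "l \<le> t" "0 < t"
  shows "pmf (reservoir_step l t x T) S
           = real (card {y\<in>T. insert x (T - {y}) = S}) / real t
             + (if T = S then 1 - real l / real t else 0)"
proof -
  define p where "p = real l / real t"
  have p: "0 \<le> p" "p \<le> 1" using t by (auto simp: p_def)
  have swap: "p * pmf (map_pmf (\<lambda>y. insert x (T - {y})) (pmf_of_set T)) S
                = real (card {y\<in>T. insert x (T - {y}) = S}) / real t"
  proof (cases "l = 0")
    case True
    then show ?thesis using T by (simp add: p_def)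
  next
    case False
    then have "T \<noteq> {}" using T by auto
    then have "pmf (map_pmf (\<lambda>y. insert x (T - {y})) (pmf_of_set T)) S
                 = real (card {y\<in>T. insert x (T - {y}) = S}) / real l"
      unfolding pmf_map using T by (subst measure_pmf_of_set) (auto simp: Int_def vimage_def)
    then show ?thesis using False by (simp add: p_def)
  qed
  have "pmf (reservoir_step l t x T) S
          = p * pmf (map_pmf (\<lambda>y. insert x (T - {y})) (pmf_of_set T)) S
            + (1 - p) * pmf (return_pmf T) S"
    unfolding reservoir_step_def p_def[symmetric] using p by (simp add: pmf_bind)
  then show ?thesis unfolding swap by (simp add: p_def indicator_def)
qed

lemma swap_in_subsets_of_card:
  assumes A: "finite A" "x \<notin> A" and T: "T \<in> subsets_of_card l A" and y: "y \<in> T"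
  shows "insert x (T - {y}) \<in> subsets_of_card l (insert x A)"
proof -
  have "finite T" "x \<notin> T" "card T > 0"
    using T A y unfolding subsets_of_card_def by (auto intro: rev_finite_subset simp: card_gt_0_iff)
  then show ?thesis using T y unfolding subsets_of_card_def by (auto simp: card_Diff_singleton)
qed

(* An l-set S containing x arises by a swap in exactly card A + 1 - l ways:
   from T = insert y (S - {x}) for each y in A outside S. *)
lemma count_swap_predecessors:
  assumes A: "finite A" "x \<notin> A" and S: "S \<in> subsets_of_card l (insert x A)" and xS: "x \<in> S"
  shows "(\<Sum>T\<in>subsets_of_card l A. card {y\<in>T. insert x (T - {y}) = S}) = Suc (card A) - l"
proof -
  define S' where "S' = S - {x}"
  have "finite S" using S A unfolding subsets_of_card_def by (auto intro: finite_subset)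
  then have S': "S' \<subseteq> A" "x \<notin> S'" "finite S'" "card S' = l - 1" "S = insert x S'" "0 < l"
    using S xS unfolding subsets_of_card_def S'_def by (auto simp: card_gt_0_iff)
  have pairs: "Sigma (subsets_of_card l A) (\<lambda>T. {y\<in>T. insert x (T - {y}) = S})
                 = (\<lambda>y. (insert y S', y)) ` (A - S')"
  proof (intro set_eqI iffI)
    fix z assume "z \<in> Sigma (subsets_of_card l A) (\<lambda>T. {y\<in>T. insert x (T - {y}) = S})"
    then obtain T y where z: "z = (T, y)" "T \<in> subsets_of_card l A" "y \<in> T"
      and Ty: "insert x (T - {y}) = S" by auto
    have "x \<notin> T" using z A unfolding subsets_of_card_def by auto
    then have "T - {y} = S'" using Ty unfolding S'_def by auto
    then show "z \<in> (\<lambda>y. (insert y S', y)) ` (A - S')"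
      using z unfolding subsets_of_card_def by auto
  next
    fix z assume "z \<in> (\<lambda>y. (insert y S', y)) ` (A - S')"
    then obtain y where y: "z = (insert y S', y)" "y \<in> A" "y \<notin> S'" by auto
    then have "card (insert y S') = l" using S' by simp
    then show "z \<in> Sigma (subsets_of_card l A) (\<lambda>T. {y\<in>T. insert x (T - {y}) = S})"
      using y S' unfolding subsets_of_card_def by auto
  qed
  have "(\<Sum>T\<in>subsets_of_card l A. card {y\<in>T. insert x (T - {y}) = S})
          = card (Sigma (subsets_of_card l A) (\<lambda>T. {y\<in>T. insert x (T - {y}) = S}))"
    using A by (subst card_SigmaI)
      (auto simp: finite_subsets_of_card subsets_of_card_def intro: finite_subset)
  also have "\<dots> = card (A - S')" unfolding pairs by (rule card_image) (auto simp: inj_on_def)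
  also have "\<dots> = Suc (card A) - l" using S' A by (simp add: card_Diff_subset)
  finally show ?thesis .
qed

lemma binomial_step_ratio:
  assumes "l \<le> n"
  shows "(1 - real l / real (Suc n)) / real (n choose l) = 1 / real (Suc n choose l)"
proof -
  have absorb: "real (Suc n - l) * real (Suc n choose l) = real (Suc n) * real (n choose l)"
    using binomial_absorb_comp[of "Suc n" l] by (metis diff_Suc_1 of_nat_mult)
  have pos: "real (Suc n - l) > 0" using assms by simp
  have "(1 - real l / real (Suc n)) / real (n choose l)
          = real (Suc n - l) / (real (Suc n) * real (n choose l))"
    using assms by (simp add: field_simps)
  also have "\<dots> = real (Suc n - l) / (real (Suc n - l) * real (Suc n choose l))"
    by (simp only: absorb)
  also have "\<dots> = 1 / real (Suc n choose l)" using pos by simp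
  finally show ?thesis .
qed

(* Weighing the two ways of reaching an l-set S of insert x A: each of its swap predecessors
   contributes 1/(n+1), and S itself (if it avoids x) contributes the keeping probability
   1 - l/(n+1).  Either way S gets total weight 1 - l/(n+1). *)
lemma reservoir_step_weight:
  assumes A: "finite A" "x \<notin> A"
  shows "real (\<Sum>T\<in>subsets_of_card l A. card {y\<in>T. insert x (T - {y}) = S}) / real (Suc (card A))
           + (if S \<in> subsets_of_card l A then 1 - real l / real (Suc (card A)) else 0)
         = (if S \<in> subsets_of_card l (insert x A) then 1 - real l / real (Suc (card A)) else 0)"
proof -
  define U where "U = subsets_of_card l A"
  define U' where "U' = subsets_of_card l (insert x A)"
  define N where "N = (\<Sum>T\<in>U. card {y\<in>T. insert x (T - {y}) = S})"
  have no_swap: "N = 0" if "S \<notin> U' \<or> x \<notin> S"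
  proof -
    have "card {y\<in>T. insert x (T - {y}) = S} = 0" if "T \<in> U" for T
    proof -
      have "{y\<in>T. insert x (T - {y}) = S} = {}"
        using that \<open>S \<notin> U' \<or> x \<notin> S\<close> swap_in_subsets_of_card[OF A] unfolding U_def U'_def by auto
      then show ?thesis by (simp only: card.empty)
    qed
    then show ?thesis unfolding N_def by (intro sum.neutral ballI)
  qed
  consider (swap) "S \<in> U'" "x \<in> S" | (keep) "S \<in> U'" "x \<notin> S" | (none) "S \<notin> U'" by blast
  then have "real N / real (Suc (card A)) + (if S \<in> U then 1 - real l / real (Suc (card A)) else 0)
               = (if S \<in> U' then 1 - real l / real (Suc (card A)) else 0)"
  proof cases
    case swap
    have "N = Suc (card A) - l"
      using count_swap_predecessors[OF A _ swap(2)] swap(1) unfolding N_def U_def U'_def by simp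
    moreover have "S \<notin> U" using swap(2) A(2) unfolding U_def subsets_of_card_def by auto
    moreover have "l \<le> Suc (card A)"
      using swap(1) A card_mono[of "insert x A" S] unfolding U'_def subsets_of_card_def by auto
    ultimately show ?thesis using swap(1) by (simp add: field_simps)
  next
    case keep
    then have "S \<in> U" unfolding U_def U'_def subsets_of_card_def by auto
    then show ?thesis using no_swap keep by simp
  next
    case none
    then have "S \<notin> U" unfolding U_def U'_def subsets_of_card_def by auto
    then show ?thesis using no_swap none by simp
  qed
  then show ?thesis unfolding N_def U_def U'_def .
qed

lemma reservoir_step_uniform:
  assumes A: "finite A" "x \<notin> A" and l: "l \<le> card A"
  shows "bind_pmf (pmf_of_set (subsets_of_card l A)) (reservoir_step l (Suc (card A)) x)
           = pmf_of_set (subsets_of_card l (insert x A))"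
proof (rule pmf_eqI)
  fix S
  define n where "n = card A"
  define U where "U = subsets_of_card l A"
  define U' where "U' = subsets_of_card l (insert x A)"
  define q where "q = 1 - real l / real (Suc n)"
  have U: "finite U" "U \<noteq> {}" "card U = n choose l"
    using A l by (simp_all add: U_def n_def finite_subsets_of_card subsets_of_card_nonempty
        card_subsets_of_card)
  have U': "finite U'" "U' \<noteq> {}" "card U' = Suc n choose l"
    using A l by (simp_all add: U'_def n_def finite_subsets_of_card subsets_of_card_nonempty
        card_subsets_of_card)
  have step: "pmf (reservoir_step l (Suc n) x T) S
                = real (card {y\<in>T. insert x (T - {y}) = S}) / real (Suc n) + (if T = S then q else 0)"
    if "T \<in> U" for T
    unfolding q_def using that A l
    by (subst pmf_reservoir_step) (auto simp: U_def n_def subsets_of_card_def intro: finite_subset)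
  have "pmf (bind_pmf (pmf_of_set U) (reservoir_step l (Suc n) x)) S
          = (\<Sum>T\<in>U. pmf (reservoir_step l (Suc n) x T) S) / real (card U)"
    unfolding pmf_bind using U by (simp add: integral_pmf_of_set)
  also have "\<dots> = (real (\<Sum>T\<in>U. card {y\<in>T. insert x (T - {y}) = S}) / real (Suc n)
                      + (if S \<in> U then q else 0)) / real (n choose l)"
    using U by (simp add: step sum.distrib sum_divide_distrib)
  also have "\<dots> = (if S \<in> U' then q else 0) / real (n choose l)"
    using reservoir_step_weight[OF A, where l = l and S = S] unfolding U_def U'_def q_def n_def by simp
  also have "\<dots> = pmf (pmf_of_set U') S"
    using U' binomial_step_ratio[of l n] l by (simp add: q_def n_def)
  finally show "pmf (bind_pmf (pmf_of_set (subsets_of_card l A)) (reservoir_step l (Suc (card A)) x)) S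
                  = pmf (pmf_of_set (subsets_of_card l (insert x A))) S"
    by (simp add: U_def U'_def n_def)
qed

lemma subsample_aux_uniform:
  "finite A \<Longrightarrow> distinct ys \<Longrightarrow> set ys \<inter> A = {} \<Longrightarrow> l \<le> card A \<Longrightarrow>
   bind_pmf (pmf_of_set (subsets_of_card l A)) (subsample_aux l (Suc (card A)) ys)
     = pmf_of_set (subsets_of_card l (A \<union> set ys))"
proof (induction ys arbitrary: A)
  case Nil
  then show ?case by (simp add: bind_return_pmf')
next
  case (Cons x ys)
  have x: "x \<notin> A" using Cons.prems by auto
  have "bind_pmf (pmf_of_set (subsets_of_card l A)) (subsample_aux l (Suc (card A)) (x # ys))
      = bind_pmf (bind_pmf (pmf_of_set (subsets_of_card l A)) (reservoir_step l (Suc (card A)) x))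
          (subsample_aux l (Suc (card (insert x A))) ys)"
    using Cons.prems x by (simp add: subsample_aux_Cons bind_assoc_pmf)
  also have "\<dots> = bind_pmf (pmf_of_set (subsets_of_card l (insert x A)))
                    (subsample_aux l (Suc (card (insert x A))) ys)"
    using reservoir_step_uniform[OF Cons.prems(1) x Cons.prems(4)] by simp
  also have "\<dots> = pmf_of_set (subsets_of_card l (insert x A \<union> set ys))"
    using Cons.prems x by (intro Cons.IH) auto
  also have "insert x A \<union> set ys = A \<union> set (x # ys)" by simp
  finally show ?case .
qed

lemma subsample_uniform:
  assumes "distinct xs" "l \<le> length xs"
  shows "subsample l xs = pmf_of_set (subsets_of_card l (set xs))"
proof -
  define A where "A = set (take l xs)"
  have A: "finite A" "card A = l" using assms by (simp_all add: A_def distinct_card)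
  then have "subsets_of_card l A = {A}" unfolding subsets_of_card_def
    by (auto dest: card_subset_eq)
  then have "subsample l xs = bind_pmf (pmf_of_set (subsets_of_card l A)) (subsample_aux l (Suc l) (drop l xs))"
    unfolding subsample_def A_def[symmetric] by (simp add: pmf_of_set_singleton bind_return_pmf)
  also have "\<dots> = pmf_of_set (subsets_of_card l (A \<union> set (drop l xs)))"
    using assms A set_take_disj_set_drop_if_distinct[OF assms(1), of l l]
    by (intro subsample_aux_uniform[of A, unfolded \<open>card A = l\<close>]) (auto simp: A_def)
  also have "A \<union> set (drop l xs) = set xs" unfolding A_def
    by (metis append_take_drop_id set_append)
  finally show ?thesis .
qed

lemma assign_nearest:
  assumes "ts \<noteq> []"
  shows "assign d ts x < length ts \<and> (\<forall>j<length ts. d x (ts ! assign d ts x) \<le> d x (ts ! j))"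
proof -
  define m where "m = Min ((\<lambda>j. d x (ts ! j)) ` {..<length ts})"
  have "m \<in> (\<lambda>j. d x (ts ! j)) ` {..<length ts}" unfolding m_def using assms by (intro Min_in) auto
  then obtain i where i: "i < length ts" "d x (ts ! i) = m" by auto
  then have "\<forall>j<length ts. d x (ts ! i) \<le> d x (ts ! j)" unfolding m_def by (auto intro: Min_le)
  then show ?thesis unfolding assign_def using i by (intro LeastI) auto
qed

(* If some centre lies in the core of B, every point of B is assigned to a centre in B:
   a centre outside B would be strictly farther than that core point. *)
lemma nearest_centre_in_cluster:
  assumes ts: "set ts \<subseteq> X" and x: "x \<in> B" and z: "z \<in> set ts" "z \<in> core X d B"
  shows "ts ! assign d ts x \<in> B"
proof (rule ccontr)
  assume out: "ts ! assign d ts x \<notin> B"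
  have ne: "ts \<noteq> []" using z by auto
  obtain j where j: "j < length ts" "ts ! j = z" using z(1) by (auto simp: in_set_conv_nth)
  have "ts ! assign d ts x \<in> X" using assign_nearest[OF ne] ts nth_mem by blast
  then have "d x z < d x (ts ! assign d ts x)" using z(2) x out unfolding core_def by auto
  moreover have "d x (ts ! assign d ts x) \<le> d x z" using assign_nearest[OF ne, of d x] j by auto
  ultimately show False by simp
qed

lemma hitting_all_cores_refines:
  assumes part: "partition_on X C" and ts: "set ts \<subseteq> X"
    and hit: "\<forall>B\<in>C. set ts \<inter> core X d B \<noteq> {}"
  shows "refinement (induced_clustering X d ts) C"
  unfolding refinement_def
proof (intro allI impI)
  fix x y assume "same_cluster (induced_clustering X d ts) x y"
  then have xy: "x \<in> X" "y \<in> X" "assign d ts x = assign d ts y"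
    unfolding same_cluster_def induced_clustering_def by auto
  obtain Bx By where B: "Bx \<in> C" "x \<in> Bx" "By \<in> C" "y \<in> By"
    using part xy(1,2) unfolding partition_on_def by blast
  have "ts ! assign d ts x \<in> Bx" "ts ! assign d ts x \<in> By"
    using hit B xy(3) nearest_centre_in_cluster[OF ts] by (metis disjoint_iff)+
  then have "Bx = By" using part B unfolding partition_on_def disjoint_def by blast
  then show "same_cluster C x y" unfolding same_cluster_def using B by auto
qed

lemma binomial_absorb_Suc: "Suc k * (n choose Suc k) = (n - k) * (n choose k)"
  using binomial_absorption[of k n] binomial_absorb_comp[of n k] by simp

lemma binomial_ratio_le_power: "m \<le> n \<Longrightarrow> (m choose l) * n ^ l \<le> (n choose l) * m ^ l"
proof (induction l)
  case 0
  then show ?case by simp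
next
  case (Suc l)
  have factor: "(m - l) * n \<le> (n - l) * m"
  proof -
    have "(m - l) * n = m * n - l * n" "(n - l) * m = m * n - l * m"
      by (simp_all add: diff_mult_distrib diff_mult_distrib2 mult.commute)
    moreover have "m * n - l * n \<le> m * n - l * m" using Suc.prems by (intro diff_le_mono2) simp
    ultimately show ?thesis by simp
  qed
  have step: "Suc l * ((a choose Suc l) * b ^ Suc l) = ((a - l) * b) * ((a choose l) * b ^ l)"
    for a b :: nat
  proof -
    have "Suc l * ((a choose Suc l) * b ^ Suc l) = (Suc l * (a choose Suc l)) * (b * b ^ l)"
      by (simp only: power_Suc mult.assoc)
    also have "\<dots> = ((a - l) * (a choose l)) * (b * b ^ l)" by (simp only: binomial_absorb_Suc)
    finally show ?thesis by (simp only: mult_ac)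
  qed
  have "Suc l * ((m choose Suc l) * n ^ Suc l) = ((m - l) * n) * ((m choose l) * n ^ l)"
    by (rule step)
  also have "\<dots> \<le> ((n - l) * m) * ((n choose l) * m ^ l)"
    using factor Suc.IH[OF Suc.prems] by (rule mult_le_mono)
  also have "\<dots> = Suc l * ((n choose Suc l) * m ^ Suc l)"
    by (rule step[symmetric])
  finally show ?case using Suc_mult_le_cancel1 by blast
qed

lemma prob_uniform_subset_misses:
  assumes X: "finite X" and K: "K \<subseteq> X" and l: "l \<le> card X"
  shows "measure (pmf_of_set (subsets_of_card l X)) {T. T \<inter> K = {}}
           \<le> exp (- real (card K) / real (card X) * real l)"
proof (cases "card X = 0")
  case True
  then show ?thesis by simp
next
  case False
  define n c where "n = card X" and "c = card K"
  have cn: "c \<le> n" and npos: "real n > 0"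
    using K X False by (simp_all add: c_def n_def card_mono card_gt_0_iff)
  have missing: "subsets_of_card l X \<inter> {T. T \<inter> K = {}} = subsets_of_card l (X - K)"
    unfolding subsets_of_card_def by auto
  have "measure (pmf_of_set (subsets_of_card l X)) {T. T \<inter> K = {}}
          = real ((n - c) choose l) / real (n choose l)"
    using X K l by (simp add: measure_pmf_of_set missing finite_subsets_of_card subsets_of_card_nonempty
        card_subsets_of_card card_Diff_subset finite_subset n_def c_def)
  also have "\<dots> \<le> (real (n - c) / real n) ^ l"
  proof -
    have "real ((n - c) choose l) * real n ^ l \<le> real (n choose l) * real (n - c) ^ l"
      using binomial_ratio_le_power[of "n - c" n l] by (metis diff_le_self of_nat_le_iff of_nat_mult of_nat_power)
    moreover have "real (n choose l) > 0" using l by (simp add: n_def)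
    ultimately show ?thesis using npos by (simp add: field_simps power_divide)
  qed
  also have "\<dots> = (1 + (- real c / real n)) ^ l" using cn npos by (simp add: of_nat_diff field_simps)
  also have "\<dots> \<le> exp (- real c / real n) ^ l"
    using cn npos by (intro power_mono exp_ge_add_one_self) (simp add: field_simps)
  also have "\<dots> = exp (- real c / real n * real l)" by (metis exp_of_nat_mult mult.commute)
  finally show ?thesis by (simp add: c_def n_def)
qed

lemma prob_uniform_subset_misses_some:
  assumes X: "finite X" "l \<le> card X" and C: "finite C" "\<forall>B\<in>C. K B \<subseteq> X"
  shows "measure (pmf_of_set (subsets_of_card l X)) {T. \<exists>B\<in>C. T \<inter> K B = {}}
           \<le> real (card C) * exp (- (real (Min ((\<lambda>B. card (K B)) ` C)) / real (card X)) * real l)"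
proof -
  define M where "M = pmf_of_set (subsets_of_card l X)"
  define E where "E = exp (- (real (Min ((\<lambda>B. card (K B)) ` C)) / real (card X)) * real l)"
  have "measure M {T. \<exists>B\<in>C. T \<inter> K B = {}} \<le> (\<Sum>B\<in>C. measure M {T. T \<inter> K B = {}})"
    using C by (subst Collect_bex_eq) (intro measure_pmf.finite_measure_subadditive_finite, auto)
  also have "\<dots> \<le> (\<Sum>B\<in>C. E)"
  proof (rule sum_mono)
    fix B assume B: "B \<in> C"
    have "Min ((\<lambda>B. card (K B)) ` C) \<le> card (K B)" using C(1) B by simp
    then have "real (Min ((\<lambda>B. card (K B)) ` C)) * real l / real (card X)
                 \<le> real (card (K B)) * real l / real (card X)"
      by (intro divide_right_mono mult_right_mono) simp_all
    then have "exp (- real (card (K B)) / real (card X) * real l) \<le> E"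
      unfolding E_def by simp
    moreover have "measure M {T. T \<inter> K B = {}} \<le> exp (- real (card (K B)) / real (card X) * real l)"
      unfolding M_def using C(2) B by (intro prob_uniform_subset_misses X) simp
    ultimately show "measure M {T. T \<inter> K B = {}} \<le> E" by linarith
  qed
  finally show ?thesis by (simp add: M_def E_def)
qed

theorem mainTheorem12:
  fixes X :: "'a set" and d :: "'a \<Rightarrow> 'a \<Rightarrow> real" and C :: "'a set set"
    and l :: nat and xs :: "'a list"
  assumes "finite X" and "distance_space X d"
    and "partition_on X C"
    and "card C \<le> l" and "l \<le> card X"
    and "distinct xs" and "set xs = X"
  shows "measure_pmf.prob (subsample l xs)
           {T. \<forall>ts. distinct ts \<and> set ts = T \<longrightarrow> refinement (induced_clustering X d ts) C}
         \<ge> 1 - real (card C) *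
               exp (- (real (Min ((\<lambda>B. card (core X d B)) ` C)) / real (card X)) * real l)"
proof -
  define M where "M = subsample l xs"
  define G where "G = {T. \<forall>ts. distinct ts \<and> set ts = T \<longrightarrow> refinement (induced_clustering X d ts) C}"
  define Miss where "Miss = {T. \<exists>B\<in>C. T \<inter> core X d B = {}}"
  have uniform: "M = pmf_of_set (subsets_of_card l X)"
    unfolding M_def using assms(5-7) subsample_uniform distinct_card by metis
  have C: "finite C" "\<forall>B\<in>C. core X d B \<subseteq> X"
    using assms(1,3) unfolding partition_on_def core_def by (auto intro: finite_UnionD)
  have "set_pmf M = subsets_of_card l X"
    using assms(1,5) by (simp add: uniform finite_subsets_of_card subsets_of_card_nonempty)
  then have "(UNIV - G) \<inter> set_pmf M \<subseteq> Miss"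
    using hitting_all_cores_refines[OF assms(3)] by (auto simp: G_def Miss_def subsets_of_card_def)
  then have "measure M (UNIV - G) \<le> measure M Miss"
    by (subst measure_Int_set_pmf[symmetric]) (rule measure_pmf.finite_measure_mono, auto)
  also have "\<dots> \<le> real (card C) * exp (- (real (Min ((\<lambda>B. card (core X d B)) ` C)) / real (card X)) * real l)"
    unfolding uniform Miss_def using prob_uniform_subset_misses_some[OF assms(1,5) C] .
  finally show ?thesis
    using measure_pmf.prob_compl[of G M] unfolding M_def G_def by simp
qed

end
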